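(* Let $A\in\mathbb{R}^{m\times n}$, $b\in\mathbb{R}^m$, $\delta\ge0$ with $\{x:\|Ax-b\|\le\delta\}\neq\emptyset$. Then the exact penalty decomposition method described in the context, with parameters $\epsilon>0$, $\sigma>1$, $\rho_0>0$, terminates after at most $\left\lceil\frac{\ln(n)-\ln(\epsilon\rho_0)}{\ln\sigma}\right\rceil$ iterations.
   Context: Exact penalty decomposition method: (S.0) Given a tolerance $\epsilon>0$ and a ratio $\sigma>1$, choose $\rho_0>0$, set $v^0=e$ (the all-ones vector in $\mathbb{R}^n$) and $k:=0$. (S.1) Choose $x^{k+1}\in\arg\min_{x\in\mathbb{R}^n}\{\langle v^k,|x|\rangle:\ \|Ax-b\|\le\delta\}$. (S.2) For each $i$, set $v^{k+1}_i=0$ if $|x^{k+1}_i|>1/\rho_k$ and $v^{k+1}_i=1$ otherwise. (S.3) If $\langle v^{k+1},|x^{k+1}|\rangle\le\epsilon$, stop; otherwise go to (S.4). (S.4) Set $\rho_{k+1}=\sigma\rho_k$, $k:=k+1$, and go to (S.1). Here $\|\cdot\|$ is the Euclidean norm and $|x|$ the componentwise absolute value. *)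

theory Defs
  imports "HOL-Analysis.Analysis"
begin

definition vabs :: "real^'n \<Rightarrow> real^'n" where
  "vabs x = (\<chi> i. \<bar>x $ i\<bar>)"

end

theory Submission
  imports Defs
begin

text \<open>After step (S.2) every coordinate that still carries weight 1 satisfies
  \<open>|x\<^sup>k\<^sup>+\<^sup>1\<^sub>i| \<le> 1/\<rho>\<^sub>k\<close>, so the weighted \<open>\<ell>\<^sub>1\<close>-value checked in (S.3) is at most
  \<open>n/\<rho>\<^sub>k = n/(\<sigma>\<^sup>k\<rho>\<^sub>0)\<close>, whatever the iterates are; this drops below \<open>\<epsilon>\<close> once
  \<open>k \<ge> (ln n - ln(\<epsilon>\<rho>\<^sub>0))/ln \<sigma>\<close>.\<close>

lemma inner_vabs_le_card_mult_threshold: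
  fixes w y :: "real^'n"
  assumes "t \<ge> 0"
    and "\<And>i. 0 \<le> w $ i" and "\<And>i. w $ i \<le> 1"
    and "\<And>i. t < \<bar>y $ i\<bar> \<Longrightarrow> w $ i = 0"
  shows "w \<bullet> vabs y \<le> real CARD('n) * t"
proof -
  have "w $ i * \<bar>y $ i\<bar> \<le> t" for i
  proof (cases "t < \<bar>y $ i\<bar>")
    case False
    then show ?thesis
      using mult_left_le_one_le[of "\<bar>y $ i\<bar>" "w $ i"] assms(2,3)[of i] by simp
  qed (use assms in simp)
  then have "(\<Sum>i\<in>UNIV. w $ i * \<bar>y $ i\<bar>) \<le> (\<Sum>i\<in>(UNIV::'n set). t)"
    by (intro sum_mono)
  then show ?thesis
    by (simp add: inner_vec_def vabs_def)
qed

lemma le_power_ceiling_ln_ratio: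
  fixes \<sigma> c N :: real
  assumes "\<sigma> > 1" and "c > 0" and "N > 0"
  shows "N \<le> \<sigma> ^ nat (max 0 \<lceil>(ln N - ln c) / ln \<sigma>\<rceil>) * c"
proof -
  define K where "K = nat (max 0 \<lceil>(ln N - ln c) / ln \<sigma>\<rceil>)"
  have "ln \<sigma> > 0" using assms(1) by simp
  moreover have "(ln N - ln c) / ln \<sigma> \<le> real K"
    unfolding K_def by linarith
  ultimately have "ln N \<le> real K * ln \<sigma> + ln c"
    by (simp add: divide_le_eq)
  also have "\<dots> = ln (\<sigma> ^ K * c)"
    using assms by (simp add: ln_mult ln_realpow)
  finally show ?thesis
    unfolding K_def using assms by simp
qed

theorem theorem3p2:
  fixes A :: "real^'n^'m" and b :: "real^'m" and \<delta> \<epsilon> \<sigma> \<rho>0 :: real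
    and x v :: "nat \<Rightarrow> real^'n" and \<rho> :: "nat \<Rightarrow> real"
  assumes delta: "\<delta> \<ge> 0"
    and feasible: "\<exists>z. norm (A *v z - b) \<le> \<delta>"
    and eps: "\<epsilon> > 0" and sigma: "\<sigma> > 1" and rho0: "\<rho>0 > 0"
    and S0_rho: "\<rho> 0 = \<rho>0"
    and S0_v: "v 0 = (\<chi> i. 1)"
    and S1_feas: "\<And>k. norm (A *v x (Suc k) - b) \<le> \<delta>"
    and S1_min: "\<And>k z. norm (A *v z - b) \<le> \<delta> \<Longrightarrow> v k \<bullet> vabs (x (Suc k)) \<le> v k \<bullet> vabs z"
    and S2: "\<And>k i. v (Suc k) $ i = (if \<bar>x (Suc k) $ i\<bar> > 1 / \<rho> k then 0 else 1)"
    and S4: "\<And>k. \<rho> (Suc k) = \<sigma> * \<rho> k"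
  shows "\<exists>k::nat. int k \<le> max 0 \<lceil>(ln (real CARD('n)) - ln (\<epsilon> * \<rho>0)) / ln \<sigma>\<rceil>
                 \<and> v (Suc k) \<bullet> vabs (x (Suc k)) \<le> \<epsilon>"
proof -
  define K where "K = nat (max 0 \<lceil>(ln (real CARD('n)) - ln (\<epsilon> * \<rho>0)) / ln \<sigma>\<rceil>)"
  have rho_K: "\<rho> K = \<sigma> ^ K * \<rho>0"
    by (induction K) (simp_all add: S0_rho S4)
  then have "\<rho> K > 0"
    using sigma rho0 by simp
  have "real CARD('n) \<le> \<sigma> ^ K * (\<epsilon> * \<rho>0)"
    unfolding K_def using sigma eps rho0 by (intro le_power_ceiling_ln_ratio) simp_all
  then have "real CARD('n) / \<rho> K \<le> \<epsilon>"
    using \<open>\<rho> K > 0\<close> by (simp add: rho_K pos_divide_le_eq mult_ac)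
  moreover have "v (Suc K) \<bullet> vabs (x (Suc K)) \<le> real CARD('n) * (1 / \<rho> K)"
    using \<open>\<rho> K > 0\<close> by (intro inner_vabs_le_card_mult_threshold) (simp_all add: S2)
  ultimately have "v (Suc K) \<bullet> vabs (x (Suc K)) \<le> \<epsilon>"
    by simp
  moreover have "int K \<le> max 0 \<lceil>(ln (real CARD('n)) - ln (\<epsilon> * \<rho>0)) / ln \<sigma>\<rceil>"
    unfolding K_def by simp
  ultimately show ?thesis by blast
qed

end
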